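(* Let $G$ be a diamond-free CIS graph. Then $\alpha(G)\cdot\omega(G)\ge |V(G)|$. Consequently, $G$ has a clique or a stable set of size at least $|V(G)|^{1/2}$.
   Context: $\alpha(G)$ is the maximum size of a stable set and $\omega(G)$ the maximum size of a clique in $G$. A clique is strong if it intersects every inclusion-maximal stable set; a graph is CIS if every inclusion-maximal clique is strong. The diamond is $K_4$ minus one edge; diamond-free means no induced subgraph isomorphic to the diamond. *)

theory Defs
  imports Main Complex_Main
begin

text \<open>A finite simple graph: a finite vertex set V and a symmetric, irreflexive
adjacency relation E (only its restriction to V matters).\<close>

definition graph :: "'a set \<Rightarrow> ('a \<Rightarrow> 'a \<Rightarrow> bool) \<Rightarrow> bool" where
  "graph V E \<longleftrightarrow> finite V \<and> (\<forall>x y. E x y \<longrightarrow> E y x) \<and> (\<forall>x. \<not> E x x)"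

definition clique :: "'a set \<Rightarrow> ('a \<Rightarrow> 'a \<Rightarrow> bool) \<Rightarrow> 'a set \<Rightarrow> bool" where
  "clique V E K \<longleftrightarrow> K \<subseteq> V \<and> (\<forall>x\<in>K. \<forall>y\<in>K. x \<noteq> y \<longrightarrow> E x y)"

definition stable :: "'a set \<Rightarrow> ('a \<Rightarrow> 'a \<Rightarrow> bool) \<Rightarrow> 'a set \<Rightarrow> bool" where
  "stable V E S \<longleftrightarrow> S \<subseteq> V \<and> (\<forall>x\<in>S. \<forall>y\<in>S. \<not> E x y)"

definition maximal_clique :: "'a set \<Rightarrow> ('a \<Rightarrow> 'a \<Rightarrow> bool) \<Rightarrow> 'a set \<Rightarrow> bool" where
  "maximal_clique V E K \<longleftrightarrow> clique V E K \<and> (\<forall>K'. clique V E K' \<and> K \<subseteq> K' \<longrightarrow> K' = K)"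

definition maximal_stable :: "'a set \<Rightarrow> ('a \<Rightarrow> 'a \<Rightarrow> bool) \<Rightarrow> 'a set \<Rightarrow> bool" where
  "maximal_stable V E S \<longleftrightarrow> stable V E S \<and> (\<forall>S'. stable V E S' \<and> S \<subseteq> S' \<longrightarrow> S' = S)"

definition alpha :: "'a set \<Rightarrow> ('a \<Rightarrow> 'a \<Rightarrow> bool) \<Rightarrow> nat" where
  "alpha V E = Max (card ` {S. stable V E S})"

definition omega :: "'a set \<Rightarrow> ('a \<Rightarrow> 'a \<Rightarrow> bool) \<Rightarrow> nat" where
  "omega V E = Max (card ` {K. clique V E K})"

definition strong_clique :: "'a set \<Rightarrow> ('a \<Rightarrow> 'a \<Rightarrow> bool) \<Rightarrow> 'a set \<Rightarrow> bool" where
  "strong_clique V E K \<longleftrightarrow> clique V E K \<and> (\<forall>S. maximal_stable V E S \<longrightarrow> K \<inter> S \<noteq> {})"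

definition CIS :: "'a set \<Rightarrow> ('a \<Rightarrow> 'a \<Rightarrow> bool) \<Rightarrow> bool" where
  "CIS V E \<longleftrightarrow> (\<forall>K. maximal_clique V E K \<longrightarrow> strong_clique V E K)"

definition diamond_free :: "'a set \<Rightarrow> ('a \<Rightarrow> 'a \<Rightarrow> bool) \<Rightarrow> bool" where
  "diamond_free V E \<longleftrightarrow> \<not> (\<exists>a\<in>V. \<exists>b\<in>V. \<exists>c\<in>V. \<exists>d\<in>V.
      distinct [a, b, c, d] \<and> E a b \<and> E a c \<and> E a d \<and> E b c \<and> E b d \<and> \<not> E c d)"

end

theory Submission imports Defs begin

(* Fix a maximum stable set S. Since G is CIS, every maximal clique Q meets S, necessarily in
   exactly one vertex s_Q. Let c(x) be the number of maximal cliques containing x and give Q the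
   weight 1 / c(s_Q); then every vertex of S carries total weight 1, so the total weight is alpha.
   If v is adjacent to s in S, exchanging the S-neighbours of v for v and extending to a maximal
   stable set T shows that each maximal clique through s meets T outside S, in distinct vertices
   because in a diamond-free graph two maximal cliques sharing an edge coincide; as |T| <= alpha
   this gives c(s) <= c(v). Hence every vertex carries weight at least 1, and double counting
   yields |V| <= sum_Q |Q| w(Q) <= omega * alpha. *)

lemma finite_ex_maximal_superset:
  assumes "finite V" "P K" "\<And>M. P M \<Longrightarrow> M \<subseteq> V"
  shows "\<exists>M. P M \<and> K \<subseteq> M \<and> (\<forall>M'. P M' \<and> M \<subseteq> M' \<longrightarrow> M' = M)"
proof -
  have "finite {M. P M}"
    using assms by (blast intro: finite_subset[of _ "Pow V"])
  from finite_has_maximal2[OF this, of K] assms(2) show ?thesis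
    by auto
qed

lemma Max_card_attained:
  assumes "finite V" "P {}" "\<And>X. P X \<Longrightarrow> X \<subseteq> V"
  shows "\<exists>X. P X \<and> card X = Max (card ` {X. P X})"
proof -
  have "finite {X. P X}"
    using assms by (blast intro: finite_subset[of _ "Pow V"])
  then have "Max (card ` {X. P X}) \<in> card ` {X. P X}"
    using assms(2) by (intro Max_in) auto
  then show ?thesis
    by auto
qed

lemma card_le_Max_card:
  assumes "finite V" "\<And>X. P X \<Longrightarrow> X \<subseteq> V" "P X"
  shows "card X \<le> Max (card ` {X. P X})"
proof -
  have "finite {X. P X}"
    using assms by (blast intro: finite_subset[of _ "Pow V"])
  then show ?thesis
    using assms(3) by (intro Max_ge) auto
qed

lemma clique_extends_to_maximal:
  assumes "finite V" "clique V E K"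
  obtains Q where "maximal_clique V E Q" "K \<subseteq> Q"
proof -
  have "\<And>M. clique V E M \<Longrightarrow> M \<subseteq> V"
    by (simp add: clique_def)
  with assms obtain M where "clique V E M" "K \<subseteq> M" "\<forall>M'. clique V E M' \<and> M \<subseteq> M' \<longrightarrow> M' = M"
    using finite_ex_maximal_superset[of V "clique V E" K] by blast
  then show thesis
    using that by (simp add: maximal_clique_def)
qed

lemma stable_extends_to_maximal:
  assumes "finite V" "stable V E S"
  obtains T where "maximal_stable V E T" "S \<subseteq> T"
proof -
  have "\<And>M. stable V E M \<Longrightarrow> M \<subseteq> V"
    by (simp add: stable_def)
  with assms obtain M where "stable V E M" "S \<subseteq> M" "\<forall>M'. stable V E M' \<and> M \<subseteq> M' \<longrightarrow> M' = M"
    using finite_ex_maximal_superset[of V "stable V E" S] by blast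
  then show thesis
    using that by (simp add: maximal_stable_def)
qed

lemma card_stable_le_alpha: "finite V \<Longrightarrow> stable V E S \<Longrightarrow> card S \<le> alpha V E"
  unfolding alpha_def by (rule card_le_Max_card) (auto simp: stable_def)

lemma card_clique_le_omega: "finite V \<Longrightarrow> clique V E K \<Longrightarrow> card K \<le> omega V E"
  unfolding omega_def by (rule card_le_Max_card) (auto simp: clique_def)

lemma ex_maximum_stable: "finite V \<Longrightarrow> \<exists>S. stable V E S \<and> card S = alpha V E"
  unfolding alpha_def by (rule Max_card_attained) (auto simp: stable_def)

lemma ex_maximum_clique: "finite V \<Longrightarrow> \<exists>K. clique V E K \<and> card K = omega V E"
  unfolding omega_def by (rule Max_card_attained) (auto simp: clique_def)

lemma maximum_stable_is_maximal:
  assumes "finite V" "stable V E S" "card S = alpha V E"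
  shows "maximal_stable V E S"
  unfolding maximal_stable_def
proof (intro conjI allI impI assms(2))
  fix S' assume S': "stable V E S' \<and> S \<subseteq> S'"
  then have "card S' \<le> card S" and "finite S'"
    using assms card_stable_le_alpha[of V E S'] by (auto simp: stable_def intro: finite_subset)
  with S' show "S' = S"
    using card_seteq by blast
qed

lemma clique_inter_stable_unique:
  assumes "clique V E K" "stable V E S" "x \<in> K \<inter> S" "y \<in> K \<inter> S"
  shows "x = y"
  using assms unfolding clique_def stable_def by blast

lemma clique_adjacent: "clique V E K \<Longrightarrow> x \<in> K \<Longrightarrow> y \<in> K \<Longrightarrow> x \<noteq> y \<Longrightarrow> E x y"
  by (simp add: clique_def)

lemma diamond_free_maximal_cliques_eq:
  assumes "graph V E" "diamond_free V E"
    and Q1: "maximal_clique V E Q1" and Q2: "maximal_clique V E Q2"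
    and x: "x \<in> Q1" "x \<in> Q2" and y: "y \<in> Q1" "y \<in> Q2" and "x \<noteq> y"
  shows "Q1 = Q2"
proof (rule ccontr)
  have sym: "\<And>u w. E u w \<Longrightarrow> E w u"
    using \<open>graph V E\<close> by (simp add: graph_def)
  have K1: "clique V E Q1" and K2: "clique V E Q2"
    using Q1 Q2 by (simp_all add: maximal_clique_def)
  assume "Q1 \<noteq> Q2"
  with Q1 Q2 obtain a where a: "a \<in> Q1" "a \<notin> Q2"
    unfolding maximal_clique_def by blast
  have "\<exists>b\<in>Q2. b \<noteq> a \<and> \<not> E a b"
  proof (rule ccontr)
    assume "\<not> (\<exists>b\<in>Q2. b \<noteq> a \<and> \<not> E a b)"
    moreover have "a \<in> V"
      using a K1 by (auto simp: clique_def)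
    ultimately have "clique V E (insert a Q2)"
      using K2 sym by (auto simp: clique_def)
    then show False
      using Q2 a unfolding maximal_clique_def by blast
  qed
  then obtain b where b: "b \<in> Q2" "b \<noteq> a" "\<not> E a b"
    by blast
  have "b \<notin> Q1"
    using clique_adjacent[OF K1 a(1), of b] b by blast
  then have "distinct [x, y, a, b]"
    using \<open>x \<noteq> y\<close> x y a b by fastforce
  moreover have "E x y" "E x a" "E y a" "E x b" "E y b"
    using clique_adjacent[OF K1] clique_adjacent[OF K2] x y a b \<open>distinct [x, y, a, b]\<close>
    by simp_all
  moreover have "x \<in> V" "y \<in> V" "a \<in> V" "b \<in> V"
    using K1 K2 x y a b unfolding clique_def by auto
  moreover have "\<forall>p\<in>V. \<forall>q\<in>V. \<forall>r\<in>V. \<forall>t\<in>V.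
      \<not> (distinct [p, q, r, t] \<and> E p q \<and> E p r \<and> E p t \<and> E q r \<and> E q t \<and> \<not> E r t)"
    using \<open>diamond_free V E\<close> unfolding diamond_free_def by blast
  ultimately show False
    using b(3) by blast
qed

lemma sqrt_le_max_of_le_mult:
  assumes "real n \<le> real a * real b"
  shows "sqrt (real n) \<le> real (max a b)"
proof -
  have "real a * real b \<le> real (max a b) * real (max a b)"
    by (intro mult_mono) auto
  with assms show ?thesis
    by (simp add: real_le_lsqrt power2_eq_square)
qed

locale diamond_free_CIS_maximum_stable =
  fixes V :: "'a set" and E :: "'a \<Rightarrow> 'a \<Rightarrow> bool" and S :: "'a set"
  assumes graph: "graph V E" and diamond_free: "diamond_free V E" and CIS: "CIS V E"
    and stable_S: "stable V E S" and card_S: "card S = alpha V E"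
begin

definition maximal_cliques :: "'a set set" where
  "maximal_cliques = {Q. maximal_clique V E Q}"

definition clique_degree :: "'a \<Rightarrow> nat" where
  "clique_degree x = card {Q \<in> maximal_cliques. x \<in> Q}"

(* For a maximal clique Q the set Q \<inter> S is a singleton (maximal_clique_inter_S), so the_elem
   picks out the vertex s_Q. *)
definition weight :: "'a set \<Rightarrow> real" where
  "weight Q = 1 / real (clique_degree (the_elem (Q \<inter> S)))"

lemma finite_V: "finite V"
  using graph by (simp add: graph_def)

lemma finite_S: "finite S"
  using stable_S finite_V by (auto simp: stable_def intro: finite_subset)

lemma finite_maximal_cliques: "finite maximal_cliques"
  unfolding maximal_cliques_def
  by (rule finite_subset[of _ "Pow V"]) (auto simp: maximal_clique_def clique_def finite_V)

lemma maximal_clique_meets_S: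
  assumes "Q \<in> maximal_cliques"
  obtains s where "s \<in> Q" "s \<in> S"
proof -
  have "strong_clique V E Q"
    using CIS assms unfolding CIS_def maximal_cliques_def by simp
  then show ?thesis
    using that maximum_stable_is_maximal[OF finite_V stable_S card_S]
    unfolding strong_clique_def by blast
qed

lemma maximal_clique_inter_S:
  assumes "Q \<in> maximal_cliques" "s \<in> Q" "s \<in> S"
  shows "Q \<inter> S = {s}"
  using assms clique_inter_stable_unique[OF _ stable_S, of Q]
  by (auto simp: maximal_cliques_def maximal_clique_def)

lemma weight_eq:
  assumes "Q \<in> maximal_cliques" "s \<in> Q" "s \<in> S"
  shows "weight Q = 1 / real (clique_degree s)"
  using maximal_clique_inter_S[OF assms] by (simp add: weight_def)

lemma clique_degree_pos:
  assumes "x \<in> V"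
  shows "0 < clique_degree x"
proof -
  have "clique V E {x}"
    using assms by (simp add: clique_def)
  then obtain Q where "maximal_clique V E Q" "x \<in> Q"
    using clique_extends_to_maximal[OF finite_V] by blast
  then show ?thesis
    using finite_maximal_cliques
    unfolding clique_degree_def by (auto simp: maximal_cliques_def card_gt_0_iff)
qed

lemma card_S_neighbours_le_clique_degree:
  assumes "v \<in> V"
  shows "card {x \<in> S. E v x} \<le> clique_degree v"
proof -
  have "\<forall>x \<in> {x \<in> S. E v x}. \<exists>Q. Q \<in> maximal_cliques \<and> v \<in> Q \<and> x \<in> Q"
  proof
    fix x assume x: "x \<in> {x \<in> S. E v x}"
    then have "clique V E {v, x}"
      using assms stable_S graph by (auto simp: clique_def stable_def graph_def)
    then obtain Q where "maximal_clique V E Q" "{v, x} \<subseteq> Q"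
      using clique_extends_to_maximal[OF finite_V] by blast
    then show "\<exists>Q. Q \<in> maximal_cliques \<and> v \<in> Q \<and> x \<in> Q"
      by (auto simp: maximal_cliques_def)
  qed
  then obtain h where h: "\<And>x. x \<in> {x \<in> S. E v x} \<Longrightarrow> h x \<in> maximal_cliques \<and> v \<in> h x \<and> x \<in> h x"
    by metis
  have "inj_on h {x \<in> S. E v x}"
    by (rule inj_onI) (use h maximal_clique_inter_S in blast)
  moreover have "h ` {x \<in> S. E v x} \<subseteq> {Q \<in> maximal_cliques. v \<in> Q}"
    using h by auto
  ultimately show ?thesis
    unfolding clique_degree_def using finite_maximal_cliques by (intro card_inj_on_le) auto
qed

lemma clique_degree_le_card_outside_S:
  assumes T: "maximal_stable V E T" and s: "s \<in> S" "s \<notin> T"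
  shows "clique_degree s \<le> card (T - S)"
proof -
  have "\<forall>R \<in> {R \<in> maximal_cliques. s \<in> R}. \<exists>r. r \<in> R \<inter> (T - S)"
  proof
    fix R assume R: "R \<in> {R \<in> maximal_cliques. s \<in> R}"
    then have "strong_clique V E R"
      using CIS by (simp add: CIS_def maximal_cliques_def)
    then obtain r where r: "r \<in> R" "r \<in> T"
      using T by (auto simp: strong_clique_def)
    then have "r \<notin> S"
      using maximal_clique_inter_S[of R s] R s by auto
    with r show "\<exists>r. r \<in> R \<inter> (T - S)"
      by blast
  qed
  then obtain f where f: "\<And>R. R \<in> {R \<in> maximal_cliques. s \<in> R} \<Longrightarrow> f R \<in> R \<inter> (T - S)"
    by metis
  have "inj_on f {R \<in> maximal_cliques. s \<in> R}"
  proof (rule inj_onI)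
    fix R1 R2
    assume R: "R1 \<in> {R \<in> maximal_cliques. s \<in> R}" "R2 \<in> {R \<in> maximal_cliques. s \<in> R}"
      and "f R1 = f R2"
    then have "f R1 \<in> R1" "f R1 \<in> R2" "s \<in> R1" "s \<in> R2" "f R1 \<noteq> s"
      using f[OF R(1)] f[OF R(2)] s by auto
    moreover have "maximal_clique V E R1" "maximal_clique V E R2"
      using R by (simp_all add: maximal_cliques_def)
    ultimately show "R1 = R2"
      using diamond_free_maximal_cliques_eq[OF graph diamond_free] by blast
  qed
  moreover have "f ` {R \<in> maximal_cliques. s \<in> R} \<subseteq> T - S"
    using f by blast
  moreover have "finite (T - S)"
    using T finite_V by (auto simp: maximal_stable_def stable_def intro: finite_subset)
  ultimately show ?thesis
    unfolding clique_degree_def by (rule card_inj_on_le)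
qed

lemma clique_degree_le_S_neighbours:
  assumes v: "v \<in> V" and s: "s \<in> S" "E v s"
  shows "clique_degree s \<le> card {x \<in> S. E v x}"
proof -
  define X where "X = {x \<in> S. E v x}"
  have "stable V E (insert v (S - X))"
    using stable_S v graph unfolding X_def stable_def graph_def by auto
  then obtain T where T: "maximal_stable V E T" "insert v (S - X) \<subseteq> T"
    using stable_extends_to_maximal[OF finite_V] by blast
  have "stable V E T" "finite T"
    using T finite_V by (auto simp: maximal_stable_def stable_def intro: finite_subset)
  have "s \<notin> T"
    using T s \<open>stable V E T\<close> by (auto simp: stable_def)
  have "card (S - X) \<le> card (T \<inter> S)"
    using T \<open>finite T\<close> by (intro card_mono) auto
  moreover have "card T \<le> card S"
    using card_stable_le_alpha[OF finite_V \<open>stable V E T\<close>] card_S by simp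
  moreover have "card (T - S) = card T - card (T \<inter> S)" "card (T \<inter> S) \<le> card T"
    using \<open>finite T\<close> by (simp_all add: card_Diff_subset_Int card_mono)
  moreover have "card (S - X) = card S - card X" "card X \<le> card S"
    using finite_S by (simp_all add: X_def card_Diff_subset card_mono)
  ultimately have "card (T - S) \<le> card X"
    by linarith
  with clique_degree_le_card_outside_S[OF T(1) s(1) \<open>s \<notin> T\<close>] show ?thesis
    by (simp add: X_def)
qed

lemma clique_degree_S_vertex_le:
  assumes "Q \<in> maximal_cliques" "v \<in> Q" "s \<in> Q" "s \<in> S"
  shows "clique_degree s \<le> clique_degree v"
proof (cases "v = s")
  case False
  then have "v \<in> V" "E v s"
    using assms by (auto simp: maximal_cliques_def maximal_clique_def clique_def)
  then show ?thesis
    using clique_degree_le_S_neighbours[OF _ assms(4)] card_S_neighbours_le_clique_degree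
    by (meson order_trans)
qed simp

lemma weight_sum_through_S_vertex:
  assumes "s \<in> S"
  shows "(\<Sum>Q \<in> {Q \<in> maximal_cliques. s \<in> Q}. weight Q) = 1"
proof -
  have "0 < clique_degree s"
    using assms stable_S by (auto simp: stable_def intro: clique_degree_pos)
  have "(\<Sum>Q \<in> {Q \<in> maximal_cliques. s \<in> Q}. weight Q)
      = (\<Sum>Q \<in> {Q \<in> maximal_cliques. s \<in> Q}. 1 / real (clique_degree s))"
    using weight_eq assms by (intro sum.cong) auto
  also have "\<dots> = real (clique_degree s) * (1 / real (clique_degree s))"
    by (simp add: clique_degree_def)
  finally show ?thesis
    using \<open>0 < clique_degree s\<close> by simp
qed

lemma weight_sum_through_vertex_ge_1:
  assumes "v \<in> V"
  shows "1 \<le> (\<Sum>Q \<in> {Q \<in> maximal_cliques. v \<in> Q}. weight Q)"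
proof -
  have "1 = real (clique_degree v) * (1 / real (clique_degree v))"
    using clique_degree_pos[OF assms] by simp
  also have "\<dots> = (\<Sum>Q \<in> {Q \<in> maximal_cliques. v \<in> Q}. 1 / real (clique_degree v))"
    by (simp add: clique_degree_def)
  also have "\<dots> \<le> (\<Sum>Q \<in> {Q \<in> maximal_cliques. v \<in> Q}. weight Q)"
  proof (rule sum_mono)
    fix Q assume Q: "Q \<in> {Q \<in> maximal_cliques. v \<in> Q}"
    then obtain s where s: "s \<in> Q" "s \<in> S"
      using maximal_clique_meets_S by blast
    then have "0 < clique_degree s"
      using stable_S by (auto simp: stable_def intro: clique_degree_pos)
    moreover have "clique_degree s \<le> clique_degree v"
      using clique_degree_S_vertex_le Q s by blast
    ultimately show "1 / real (clique_degree v) \<le> weight Q"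
      using weight_eq Q s by (simp add: frac_le)
  qed
  finally show ?thesis .
qed

lemma total_weight_eq_alpha: "(\<Sum>Q \<in> maximal_cliques. weight Q) = real (alpha V E)"
proof -
  have "(\<Sum>Q \<in> maximal_cliques. weight Q)
      = (\<Sum>Q \<in> maximal_cliques. \<Sum>s \<in> {s \<in> S. s \<in> Q}. weight Q)"
  proof (rule sum.cong)
    fix Q assume Q: "Q \<in> maximal_cliques"
    then obtain s where "s \<in> Q" "s \<in> S"
      using maximal_clique_meets_S by blast
    then have "{s \<in> S. s \<in> Q} = {s}"
      using maximal_clique_inter_S[OF Q] by blast
    then show "weight Q = (\<Sum>s \<in> {s \<in> S. s \<in> Q}. weight Q)"
      by simp
  qed simp
  also have "\<dots> = (\<Sum>s \<in> S. \<Sum>Q \<in> {Q \<in> maximal_cliques. s \<in> Q}. weight Q)"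
    by (rule sum.swap_restrict[symmetric, OF finite_S finite_maximal_cliques])
  also have "\<dots> = real (card S)"
    by (simp add: weight_sum_through_S_vertex)
  finally show ?thesis
    by (simp add: card_S)
qed

lemma card_le_weighted_clique_sizes:
  "real (card V) \<le> (\<Sum>Q \<in> maximal_cliques. real (card Q) * weight Q)"
proof -
  have "real (card V) \<le> (\<Sum>v \<in> V. \<Sum>Q \<in> {Q \<in> maximal_cliques. v \<in> Q}. weight Q)"
    using sum_mono[OF weight_sum_through_vertex_ge_1] by simp
  also have "\<dots> = (\<Sum>Q \<in> maximal_cliques. \<Sum>v \<in> {v \<in> V. v \<in> Q}. weight Q)"
    by (rule sum.swap_restrict[OF finite_V finite_maximal_cliques])
  also have "\<dots> = (\<Sum>Q \<in> maximal_cliques. real (card Q) * weight Q)"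
  proof (rule sum.cong)
    fix Q assume "Q \<in> maximal_cliques"
    then have "{v \<in> V. v \<in> Q} = Q"
      by (auto simp: maximal_cliques_def maximal_clique_def clique_def)
    then show "(\<Sum>v \<in> {v \<in> V. v \<in> Q}. weight Q) = real (card Q) * weight Q"
      by simp
  qed simp
  finally show ?thesis .
qed

lemma card_le_alpha_mult_omega: "real (card V) \<le> real (alpha V E) * real (omega V E)"
proof -
  have "(\<Sum>Q \<in> maximal_cliques. real (card Q) * weight Q)
      \<le> (\<Sum>Q \<in> maximal_cliques. real (omega V E) * weight Q)"
  proof (rule sum_mono)
    fix Q assume "Q \<in> maximal_cliques"
    then have "clique V E Q"
      by (simp add: maximal_cliques_def maximal_clique_def)
    then have "real (card Q) \<le> real (omega V E)"
      using card_clique_le_omega[OF finite_V] by simp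
    moreover have "0 \<le> weight Q"
      by (simp add: weight_def)
    ultimately show "real (card Q) * weight Q \<le> real (omega V E) * weight Q"
      by (rule mult_right_mono)
  qed
  also have "\<dots> = real (omega V E) * real (alpha V E)"
    using sum_distrib_left[of "real (omega V E)" weight maximal_cliques] total_weight_eq_alpha
    by simp
  finally show ?thesis
    using card_le_weighted_clique_sizes by (simp add: mult.commute)
qed

end

theorem theorem2:
  fixes V :: "'a set" and E :: "'a \<Rightarrow> 'a \<Rightarrow> bool"
  assumes "graph V E" and "diamond_free V E" and "CIS V E"
  shows "alpha V E * omega V E \<ge> card V \<and>
    (\<exists>X. (clique V E X \<or> stable V E X) \<and> real (card X) \<ge> sqrt (real (card V)))"
proof -
  have "finite V"
    using assms(1) by (simp add: graph_def)
  obtain S where S: "stable V E S" "card S = alpha V E"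
    using ex_maximum_stable[OF \<open>finite V\<close>] by blast
  obtain K where K: "clique V E K" "card K = omega V E"
    using ex_maximum_clique[OF \<open>finite V\<close>] by blast
  interpret diamond_free_CIS_maximum_stable V E S
    using assms S by unfold_locales
  have "sqrt (real (card V)) \<le> real (max (alpha V E) (omega V E))"
    by (rule sqrt_le_max_of_le_mult[OF card_le_alpha_mult_omega])
  then have "\<exists>X. (clique V E X \<or> stable V E X) \<and> real (card X) \<ge> sqrt (real (card V))"
    using S K by (cases "alpha V E \<le> omega V E") (auto simp: max_def)
  moreover have "card V \<le> alpha V E * omega V E"
    using card_le_alpha_mult_omega by (simp flip: of_nat_mult)
  ultimately show ?thesis
    by blast
qed

end
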